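(* Let $\mathbb{F}\in\{\mathbb{R},\mathbb{C}\}$, let $A\in\mathcal{M}_n(\mathbb{F})$ be Hermitian, and let $\mathbf{v}=(v_1,\dots,v_n)^\top\in\mathbb{F}^n$ be an eigenvector of $A$ whose first entry $v_1$ is real and nonzero. Define $\mathbf{q}_1\coloneqq\mathbf{v}$ and $\mathbf{q}_i\coloneqq \overline{v}_i\,\mathbf{e}_1 - v_1\,\mathbf{e}_i$ for $i=2,\dots,n$, where $\mathbf{e}_1,\dots,\mathbf{e}_n$ is the canonical basis of $\mathbb{F}^n$. Then the matrix $Q=(\mathbf{q}_1\ \mathbf{q}_2\ \cdots\ \mathbf{q}_n)\in\mathcal{M}_n(\mathbb{F})$ whose $i$-th column is $\mathbf{q}_i$ is Hermitian and invertible.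
   Context: $\overline{v}_i$ denotes the complex conjugate of $v_i$. *)

theory Defs
  imports "Jordan_Normal_Form.Char_Poly" "Jordan_Normal_Form.Conjugate"
begin

definition hermitian_mat :: "nat \<Rightarrow> 'a :: conjugatable_field mat \<Rightarrow> bool" where
  "hermitian_mat n A \<longleftrightarrow> A \<in> carrier_mat n n \<and>
     (\<forall>i<n. \<forall>j<n. A $$ (i, j) = conjugate (A $$ (j, i)))"

text \<open>The matrix Q whose columns are q_1 = v and q_i = conj(v_i) e_1 - v_1 e_i (i = 2..n),
  with 0-based indexing (index 0 corresponds to 1).\<close>
definition Q_mat :: "nat \<Rightarrow> 'a :: conjugatable_field vec \<Rightarrow> 'a mat" where
  "Q_mat n v = mat n n (\<lambda>(i, j).
     if j = 0 then v $ i
     else (if i = 0 then conjugate (v $ j) else 0) - (if i = j then v $ 0 else 0))"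

end

theory Submission
  imports Defs
begin

text \<open>For invertibility,
  let Q x = 0. Rows 2..n say v_1 x = x_1 v, and since v_1 is real, row 1 of Q is the conjugate
  of v, so row 1 says \<open>conjugate v \<bullet> x = 0\<close>. Multiplying by v_1 gives
  \<open>x_1 (v \<bullet>c v) = 0\<close>, and \<open>v \<bullet>c v > 0\<close> forces x_1 = 0, hence x = 0.\<close>

lemma conjugate_diff:
  fixes a b :: "'a :: conjugatable_ring"
  shows "conjugate (a - b) = conjugate a - conjugate b"
  by (simp only: diff_conv_add_uminus conjugate_dist_add conjugate_neg)

lemma Q_mat_carrier: "Q_mat n v \<in> carrier_mat n n"
  by (simp add: Q_mat_def)

lemma dim_row_Q_mat [simp]: "dim_row (Q_mat n v) = n"
  and dim_col_Q_mat [simp]: "dim_col (Q_mat n v) = n"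
  by (simp_all add: Q_mat_def)

lemma hermitian_Q_mat:
  assumes "conjugate (v $ 0) = v $ 0"
  shows "hermitian_mat n (Q_mat n v)"
  unfolding hermitian_mat_def
  using assms by (auto simp: Q_mat_carrier Q_mat_def conjugate_diff conjugate_neg)

lemma row_0_Q_mat:
  assumes "v \<in> carrier_vec n" "0 < n" "conjugate (v $ 0) = v $ 0"
  shows "row (Q_mat n v) 0 = conjugate v"
  using assms by (intro eq_vecI) (auto simp: Q_mat_def)

lemma Q_mat_mult_vec_nth:
  assumes "x \<in> carrier_vec n" "0 < i" "i < n"
  shows "(Q_mat n v *\<^sub>v x) $ i = v $ i * x $ 0 - v $ 0 * x $ i"
proof -
  have "(Q_mat n v *\<^sub>v x) $ i = (\<Sum>j<n. Q_mat n v $$ (i, j) * x $ j)"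
    using assms by (simp add: scalar_prod_def Q_mat_def lessThan_atLeast0)
  also have "\<dots> = (\<Sum>j<n. (if j = 0 then v $ i * x $ 0 else 0) - (if j = i then v $ 0 * x $ i else 0))"
    using assms by (intro sum.cong) (auto simp: Q_mat_def)
  also have "\<dots> = v $ i * x $ 0 - v $ 0 * x $ i"
    using assms by (simp add: sum_subtractf)
  finally show ?thesis .
qed

lemma Q_mat_mult_vec_eq_0:
  fixes v :: "'a :: conjugatable_ordered_field vec"
  assumes v: "v \<in> carrier_vec n" "v $ 0 \<noteq> 0" "conjugate (v $ 0) = v $ 0"
    and x: "x \<in> carrier_vec n" "Q_mat n v *\<^sub>v x = 0\<^sub>v n"
  shows "x = 0\<^sub>v n"
proof (cases "n = 0")
  case True
  with x show ?thesis by auto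
next
  case False
  have proportional: "v $ 0 \<cdot>\<^sub>v x = x $ 0 \<cdot>\<^sub>v v"
  proof (intro eq_vecI)
    fix i assume "i < dim_vec (x $ 0 \<cdot>\<^sub>v v)"
    with v x Q_mat_mult_vec_nth[of x n i v] show "(v $ 0 \<cdot>\<^sub>v x) $ i = (x $ 0 \<cdot>\<^sub>v v) $ i"
      by (cases "i = 0") (auto simp: mult.commute)
  qed (use v x in auto)
  have row_0: "conjugate v \<bullet> x = 0"
    using x(2) row_0_Q_mat[OF v(1) _ v(3)] False
    by (metis index_mult_mat_vec index_zero_vec(1) dim_row_Q_mat not_gr0)
  have "x $ 0 * (conjugate v \<bullet> v) = conjugate v \<bullet> (x $ 0 \<cdot>\<^sub>v v)"
    using v by simp
  also have "\<dots> = conjugate v \<bullet> (v $ 0 \<cdot>\<^sub>v x)"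
    by (simp add: proportional)
  also have "\<dots> = v $ 0 * (conjugate v \<bullet> x)"
    using v x by simp
  finally have "x $ 0 * (conjugate v \<bullet> v) = 0"
    by (simp add: row_0)
  moreover have "conjugate v \<bullet> v \<noteq> 0"
  proof -
    have "v \<noteq> 0\<^sub>v n"
      using v(2) False by auto
    then have "v \<bullet>c v > 0"
      using v(1) by simp
    then show ?thesis
      using conjugate_vec_sprod_comm[OF v(1) v(1)] by simp
  qed
  ultimately have "x $ 0 = 0"
    by simp
  show ?thesis
  proof (intro eq_vecI)
    fix i assume i: "i < dim_vec (0\<^sub>v n :: 'a vec)"
    with x v have "v $ 0 * x $ i = x $ 0 * v $ i"
      using arg_cong[OF proportional, of "\<lambda>w. w $ i"] by auto
    with \<open>x $ 0 = 0\<close> v(2) i show "x $ i = 0\<^sub>v n $ i"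
      by simp
  qed (use x in auto)
qed

lemma invertible_mat_if_trivial_kernel:
  fixes A :: "'a :: field mat"
  assumes A: "A \<in> carrier_mat n n"
    and kernel: "\<And>x. x \<in> carrier_vec n \<Longrightarrow> A *\<^sub>v x = 0\<^sub>v n \<Longrightarrow> x = 0\<^sub>v n"
  shows "invertible_mat A"
proof -
  have "det A \<noteq> 0"
    using kernel unfolding det_0_iff_vec_prod_zero_field[OF A] by blast
  then have "A \<in> Units (ring_mat TYPE('a) n ())"
    by (rule det_non_zero_imp_unit[OF A])
  then obtain B where "B \<in> carrier_mat n n" "B * A = 1\<^sub>m n" "A * B = 1\<^sub>m n"
    unfolding Units_def ring_mat_def by auto
  with A show ?thesis
    unfolding invertible_mat_def inverts_mat_def by auto
qed

lemma invertible_Q_mat: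
  fixes v :: "'a :: conjugatable_ordered_field vec"
  assumes "v \<in> carrier_vec n" "v $ 0 \<noteq> 0" "conjugate (v $ 0) = v $ 0"
  shows "invertible_mat (Q_mat n v)"
  using Q_mat_carrier Q_mat_mult_vec_eq_0[OF assms]
  by (rule invertible_mat_if_trivial_kernel)

theorem lemma4p1:
  shows "(\<forall>n (A :: real mat) v. hermitian_mat n A \<longrightarrow> v \<in> carrier_vec n \<longrightarrow>
            (\<exists>lam. eigenvector A v lam) \<longrightarrow> v $ 0 \<noteq> 0 \<longrightarrow>
            hermitian_mat n (Q_mat n v) \<and> invertible_mat (Q_mat n v))
       \<and> (\<forall>n (A :: complex mat) v. hermitian_mat n A \<longrightarrow> v \<in> carrier_vec n \<longrightarrow>
            (\<exists>lam. eigenvector A v lam) \<longrightarrow> v $ 0 \<in> \<real> \<longrightarrow> v $ 0 \<noteq> 0 \<longrightarrow>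
            hermitian_mat n (Q_mat n v) \<and> invertible_mat (Q_mat n v))"
proof (intro conjI allI impI)
  fix n and v :: "real vec"
  assume "v \<in> carrier_vec n" "v $ 0 \<noteq> 0"
  then show "hermitian_mat n (Q_mat n v)" "invertible_mat (Q_mat n v)"
    by (simp_all add: hermitian_Q_mat invertible_Q_mat)
next
  fix n and v :: "complex vec"
  assume "v \<in> carrier_vec n" "v $ 0 \<in> \<real>" "v $ 0 \<noteq> 0"
  moreover from \<open>v $ 0 \<in> \<real>\<close> have "conjugate (v $ 0) = v $ 0"
    by (simp add: Reals_cnj_iff)
  ultimately show "hermitian_mat n (Q_mat n v)" "invertible_mat (Q_mat n v)"
    by (simp_all add: hermitian_Q_mat invertible_Q_mat)
qed

end
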